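(* Let $F$ be a field of characteristic $0$, $h\ge 0$ an integer, and $m=p+q$ with $p,q\ge0$ and $q\ge 1$. Let $z_1,\dots,z_m$ be variables with $\alpha(z_i)=d_i>0$, where $d_1,\dots,d_p$ are odd and $d_{p+1},\dots,d_m$ are even. Suppose $f\in\Gamma_{0,m}\cap T_{\mathbb{Z}}(E^h)$. Then $f\equiv f_1z_m+f_2\pmod I$, where $f_1\in\Gamma_{0,m-1}\cap T_{\mathbb{Z}}(E^h)$ is a multilinear polynomial in $z_1,\dots,z_{m-1}$, and $f_2$ is a linear combination of products of variables and of commutators $[z_i,z_j]$ in which $z_m$ occurs only inside commutators. Moreover $f_2\in\Gamma_{0,m}\cap T_{\mathbb{Z}}(E^h)$.
   Context: $L$ is a vector space over $F$ with basis $e_1,e_2,\dots$, $E$ its unital Grassmann algebra (basis $1$ and $e_{i_1}\cdots e_{i_k}$, $i_1<\cdots<i_k$, with $e_ie_j=-e_je_i$). $E^h$ is $E$ with the $\mathbb{Z}$-grading induced by $\|e_i\|=0$ for $1\le i\le h$ and $\|e_i\|=1$ for $i\ge h+1$ (basis monomials get the sum of degrees of their factors; $1$ has degree $0$). Graded polynomials live in the free unital associative algebra $F\langle X|\mathbb{Z}\rangle$ on countably many variables of each integer degree ($\alpha(x)$ = degree of $x$); $T_{\mathbb{Z}}(A)$ is the set of polynomials vanishing under every substitution of each variable $x$ by an element of $A_{\alpha(x)}$. $I$ is the smallest ideal of $F\langle X|\mathbb{Z}\rangle$ invariant under degree-preserving endomorphisms and containing $[u_1,u_2,u_3]=[[u_1,u_2],u_3]$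 for all choices of degrees of $u_1,u_2,u_3$. For variables $z_1,\dots,z_m$ of fixed positive degrees $d_1,\dots,d_m$, $\Gamma_{0,m}$ denotes the space of multilinear polynomials in $z_1,\dots,z_m$ (with no variables of degree $0$), and $\Gamma_{0,m-1}$ the analogous space for $z_1,\dots,z_{m-1}$. *)

theory Defs
  imports Main "HOL-Library.Poly_Mapping"
begin

text \<open>Graded variables: a pair (degree, index); alpha(x) = fst x.
  Polynomials: finitely supported coefficient functions on words (lists of variables).\<close>

type_synonym gvar = "int \<times> nat"
type_synonym 'a ncpoly = "gvar list \<Rightarrow>\<^sub>0 'a"

definition pvar :: "gvar \<Rightarrow> 'a::field ncpoly" where
  "pvar x = Poly_Mapping.single [x] 1"

definition pone :: "'a::field ncpoly" where
  "pone = Poly_Mapping.single [] 1"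

definition pmul :: "'a::field ncpoly \<Rightarrow> 'a ncpoly \<Rightarrow> 'a ncpoly" where
  "pmul p q = (\<Sum>u\<in>Poly_Mapping.keys p. \<Sum>v\<in>Poly_Mapping.keys q. Poly_Mapping.single (u @ v) (Poly_Mapping.lookup p u * Poly_Mapping.lookup q v))"

definition pscale :: "'a::field \<Rightarrow> 'a ncpoly \<Rightarrow> 'a ncpoly" where
  "pscale c p = pmul (Poly_Mapping.single [] c) p"

definition pcomm :: "'a::field ncpoly \<Rightarrow> 'a ncpoly \<Rightarrow> 'a ncpoly" where
  "pcomm a b = pmul a b - pmul b a"

definition pprod :: "'a::field ncpoly list \<Rightarrow> 'a ncpoly" where
  "pprod ps = foldr pmul ps pone"

definition phomog :: "int \<Rightarrow> 'a::field ncpoly \<Rightarrow> bool" where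
  "phomog k p \<longleftrightarrow> (\<forall>w\<in>Poly_Mapping.keys p. sum_list (map fst w) = k)"

definition psubst :: "(gvar \<Rightarrow> 'a::field ncpoly) \<Rightarrow> 'a ncpoly \<Rightarrow> 'a ncpoly" where
  "psubst \<sigma> f = (\<Sum>w\<in>Poly_Mapping.keys f. pscale (Poly_Mapping.lookup f w) (pprod (map \<sigma> w)))"

definition graded_endo :: "(gvar \<Rightarrow> 'a::field ncpoly) \<Rightarrow> bool" where
  "graded_endo \<sigma> \<longleftrightarrow> (\<forall>x. phomog (fst x) (\<sigma> x))"

inductive_set Iideal :: "'a::field ncpoly set" where
  gen: "pcomm (pcomm (pvar a) (pvar b)) (pvar c) \<in> Iideal"
| zero: "0 \<in> Iideal"
| add: "f \<in> Iideal \<Longrightarrow> g \<in> Iideal \<Longrightarrow> f + g \<in> Iideal"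
| scale: "f \<in> Iideal \<Longrightarrow> pscale c f \<in> Iideal"
| lmul: "f \<in> Iideal \<Longrightarrow> pmul a f \<in> Iideal"
| rmul: "f \<in> Iideal \<Longrightarrow> pmul f a \<in> Iideal"
| endo: "f \<in> Iideal \<Longrightarrow> graded_endo \<sigma> \<Longrightarrow> psubst \<sigma> f \<in> Iideal"

text \<open>Elements of E: coefficient functions on finite subsets S of {1,2,...}
  (S = {i1<...<ik} stands for e_i1 ... e_ik), finitely supported.\<close>

definition gelem :: "(nat set \<Rightarrow> 'a::field) \<Rightarrow> bool" where
  "gelem x \<longleftrightarrow> finite {S. x S \<noteq> 0} \<and> (\<forall>S. x S \<noteq> 0 \<longrightarrow> finite S \<and> 0 \<notin> S)"

definition ginv :: "nat set \<Rightarrow> nat set \<Rightarrow> nat" where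
  "ginv A B = card {(a, b). a \<in> A \<and> b \<in> B \<and> b < a}"

text \<open>e_A e_B = (-1)^{inv(A,B)} e_{A \<union> B} if A,B disjoint, else 0.\<close>
definition gmult :: "(nat set \<Rightarrow> 'a::field) \<Rightarrow> (nat set \<Rightarrow> 'a) \<Rightarrow> nat set \<Rightarrow> 'a" where
  "gmult x y S = (\<Sum>A\<in>Pow S. (-1) ^ ginv A (S - A) * x A * y (S - A))"

definition gone :: "nat set \<Rightarrow> 'a::field" where
  "gone S = (if S = {} then 1 else 0)"

text \<open>Homogeneous component E^h_k: e_i has degree 0 for i \<le> h and 1 for i > h.\<close>
definition ghom :: "nat \<Rightarrow> int \<Rightarrow> (nat set \<Rightarrow> 'a::field) \<Rightarrow> bool" where
  "ghom h k x \<longleftrightarrow> gelem x \<and> (\<forall>S. x S \<noteq> 0 \<longrightarrow> int (card {i\<in>S. h < i}) = k)"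

definition geval :: "(gvar \<Rightarrow> nat set \<Rightarrow> 'a::field) \<Rightarrow> 'a ncpoly \<Rightarrow> nat set \<Rightarrow> 'a" where
  "geval \<phi> f S = (\<Sum>w\<in>Poly_Mapping.keys f. Poly_Mapping.lookup f w * foldr gmult (map \<phi> w) gone S)"

definition TZ :: "nat \<Rightarrow> 'a::field ncpoly set" where
  "TZ h = {f. \<forall>\<phi>. (\<forall>x. ghom h (fst x) (\<phi> x)) \<longrightarrow> geval \<phi> f = (\<lambda>_. 0)}"

text \<open>Gamma: multilinear polynomials in z 0, ..., z (n-1) (0-based indexing).\<close>
definition Gamma :: "(nat \<Rightarrow> gvar) \<Rightarrow> nat \<Rightarrow> 'a::field ncpoly set" where
  "Gamma z n = {f. \<forall>w\<in>Poly_Mapping.keys f. distinct w \<and> set w = z ` {..<n}}"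

fun atom_poly :: "(nat \<Rightarrow> gvar) \<Rightarrow> nat + nat \<times> nat \<Rightarrow> 'a::field ncpoly" where
  "atom_poly z (Inl i) = pvar (z i)"
| "atom_poly z (Inr (i, j)) = pcomm (pvar (z i)) (pvar (z j))"

definition last_in_comms :: "(nat \<Rightarrow> gvar) \<Rightarrow> nat \<Rightarrow> 'a::field ncpoly \<Rightarrow> bool" where
  "last_in_comms z m f \<longleftrightarrow>
     (\<exists>S c. finite S \<and>
        (\<forall>s\<in>S. \<forall>t\<in>set s. (case t of Inl i \<Rightarrow> i < m - 1 | Inr (i, j) \<Rightarrow> i < m \<and> j < m)) \<and>
        f = (\<Sum>s\<in>S. pscale (c s) (pprod (map (atom_poly z) s))))"

end

theory Submission
  imports Defs
begin

(* Let f1 be f with z_m deleted from every monomial and f2 = f - f1 z_m, so that the congruence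
   modulo I even holds as an equality. Moving z_m to the end of a monomial produces one
   commutator [z_m, z_j] per variable it passes, so z_m occurs in f2 only inside commutators.
   f1 is a graded identity: substituting for z_m a product e_S of |S| = deg z_m generators of
   degree 1 with indices beyond all generators used elsewhere gives an element that is central
   (|S| is even) and cancellable, and f evaluates to (value of f1) * e_S. Then f2 is an identity
   as a difference of identities. *)

section \<open>Arithmetic of noncommutative polynomials\<close>

lemma lookup_eq_0_if_notin_keys: "w \<notin> Poly_Mapping.keys p \<Longrightarrow> Poly_Mapping.lookup p w = 0"
  by (simp add: in_keys_iff)

lemma poly_mapping_sum_single: "p = (\<Sum>w\<in>Poly_Mapping.keys p. Poly_Mapping.single w (Poly_Mapping.lookup p w))"
  by (rule poly_mapping_eqI) (auto simp: lookup_sum lookup_single when_def lookup_eq_0_if_notin_keys)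

lemma pmul_keys_superset:
  assumes "finite K" "Poly_Mapping.keys p \<subseteq> K" "finite L" "Poly_Mapping.keys q \<subseteq> L"
  shows "pmul p q = (\<Sum>u\<in>K. \<Sum>v\<in>L. Poly_Mapping.single (u @ v) (Poly_Mapping.lookup p u * Poly_Mapping.lookup q v))"
proof -
  have "pmul p q = (\<Sum>u\<in>Poly_Mapping.keys p. \<Sum>v\<in>L. Poly_Mapping.single (u @ v) (Poly_Mapping.lookup p u * Poly_Mapping.lookup q v))"
    unfolding pmul_def
    by (rule sum.cong[OF refl], rule sum.mono_neutral_left) (use assms in \<open>auto simp: lookup_eq_0_if_notin_keys\<close>)
  also have "\<dots> = (\<Sum>u\<in>K. \<Sum>v\<in>L. Poly_Mapping.single (u @ v) (Poly_Mapping.lookup p u * Poly_Mapping.lookup q v))"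
    by (rule sum.mono_neutral_left) (use assms in \<open>auto simp: lookup_eq_0_if_notin_keys\<close>)
  finally show ?thesis .
qed

lemma pmul_add_left: "pmul (p + q) r = pmul p r + pmul q r"
  by (subst (1 2 3) pmul_keys_superset[where K="Poly_Mapping.keys p \<union> Poly_Mapping.keys q" and L="Poly_Mapping.keys r"])
    (use keys_add[of p q] in \<open>auto simp: lookup_add distrib_right single_add sum.distrib\<close>)

lemma pmul_diff_left: "pmul (p - q) r = pmul p r - pmul q r"
  by (subst (1 2 3) pmul_keys_superset[where K="Poly_Mapping.keys p \<union> Poly_Mapping.keys q" and L="Poly_Mapping.keys r"])
    (use keys_diff[of p q] in \<open>auto simp: lookup_minus left_diff_distrib single_diff sum_subtractf\<close>)

lemma pmul_diff_right: "pmul r (p - q) = pmul r p - pmul r q"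
  by (subst (1 2 3) pmul_keys_superset[where K="Poly_Mapping.keys r" and L="Poly_Mapping.keys p \<union> Poly_Mapping.keys q"])
    (use keys_diff[of p q] in \<open>auto simp: lookup_minus right_diff_distrib single_diff sum_subtractf\<close>)

lemma pmul_sum_left: "pmul (\<Sum>i\<in>I. g i) r = (\<Sum>i\<in>I. pmul (g i) r)"
  by (induction I rule: infinite_finite_induct) (simp_all add: pmul_add_left pmul_def[of 0])

lemma pmul_single_single:
  "pmul (Poly_Mapping.single u a) (Poly_Mapping.single v b) = Poly_Mapping.single (u @ v) (a * b)"
  by (simp add: pmul_def)

lemma pmul_pvar_right:
  "pmul p (pvar x) = (\<Sum>w\<in>Poly_Mapping.keys p. Poly_Mapping.single (w @ [x]) (Poly_Mapping.lookup p w))"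
  by (simp add: pmul_def pvar_def)

lemma lookup_pscale: "Poly_Mapping.lookup (pscale c p) w = c * Poly_Mapping.lookup p w"
proof -
  have "pscale c p = (\<Sum>u\<in>{[]}. \<Sum>v\<in>Poly_Mapping.keys p. Poly_Mapping.single (u @ v) (Poly_Mapping.lookup (Poly_Mapping.single [] c) u * Poly_Mapping.lookup p v))"
    unfolding pscale_def by (rule pmul_keys_superset) auto
  then show ?thesis
    by (auto simp: lookup_sum lookup_single when_def lookup_eq_0_if_notin_keys intro: sum.neutral)
qed

lemma pprod_Cons: "pprod (a # ps) = pmul a (pprod ps)"
  by (simp add: pprod_def)

lemma pprod_atom_vars: "pprod (map (atom_poly z) (map Inl b)) = Poly_Mapping.single (map z b) 1"
  by (induction b) (auto simp: pprod_def pone_def pvar_def pmul_single_single)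

lemma pprod_atom_comm:
  "pprod (map (atom_poly z) (map Inl a @ Inr (i, j) # map Inl b)) =
     Poly_Mapping.single (map z a @ z i # z j # map z b) 1 - Poly_Mapping.single (map z a @ z j # z i # map z b) 1"
proof (induction a)
  case Nil
  have "pprod (map (atom_poly z) (Inr (i, j) # map Inl b)) = pmul (pcomm (pvar (z i)) (pvar (z j))) (Poly_Mapping.single (map z b) 1)"
    by (simp only: list.map pprod_Cons pprod_atom_vars atom_poly.simps)
  then show ?case
    by (simp add: pcomm_def pvar_def pmul_single_single pmul_diff_left)
next
  case (Cons k a)
  then show ?case
    by (simp add: pprod_Cons pvar_def pmul_single_single pmul_diff_right)
qed

section \<open>Products of variables and commutators\<close>

definition admissible_factor :: "nat \<Rightarrow> nat + nat \<times> nat \<Rightarrow> bool" where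
  "admissible_factor m t \<longleftrightarrow> (case t of Inl i \<Rightarrow> i < m - 1 | Inr (i, j) \<Rightarrow> i < m \<and> j < m)"

lemma last_in_comms_iff:
  "last_in_comms z m f \<longleftrightarrow> (\<exists>S c. finite S \<and> (\<forall>s\<in>S. \<forall>t\<in>set s. admissible_factor m t) \<and>
     f = (\<Sum>s\<in>S. pscale (c s) (pprod (map (atom_poly z) s))))"
  unfolding last_in_comms_def admissible_factor_def ..

lemma last_in_comms_zero: "last_in_comms z m 0"
  unfolding last_in_comms_iff by (rule exI[of _ "{}"]) auto

lemma last_in_comms_monomial:
  "\<forall>t\<in>set s. admissible_factor m t \<Longrightarrow> last_in_comms z m (pscale c (pprod (map (atom_poly z) s)))"
  unfolding last_in_comms_iff by (rule exI[of _ "{s}"], rule exI[of _ "\<lambda>_. c"]) auto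

lemma last_in_comms_add:
  assumes "last_in_comms z m f" "last_in_comms z m g"
  shows "last_in_comms z m (f + g)"
proof -
  let ?P = "\<lambda>s. pprod (map (atom_poly z) s)"
  obtain S1 c1 where S1: "finite S1" "\<forall>s\<in>S1. \<forall>t\<in>set s. admissible_factor m t"
    and f: "f = (\<Sum>s\<in>S1. pscale (c1 s) (?P s))"
    using assms(1) unfolding last_in_comms_iff by blast
  obtain S2 c2 where S2: "finite S2" "\<forall>s\<in>S2. \<forall>t\<in>set s. admissible_factor m t"
    and g: "g = (\<Sum>s\<in>S2. pscale (c2 s) (?P s))"
    using assms(2) unfolding last_in_comms_iff by blast
  define c where "c s = (if s \<in> S1 then c1 s else 0) + (if s \<in> S2 then c2 s else 0)" for s
  have "f + g = (\<Sum>s\<in>S1 \<union> S2. pscale (c s) (?P s))"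
  proof (rule poly_mapping_eqI)
    fix w
    have "(\<Sum>s\<in>S1 \<union> S2. c s * Poly_Mapping.lookup (?P s) w)
        = (\<Sum>s\<in>S1. c1 s * Poly_Mapping.lookup (?P s) w) + (\<Sum>s\<in>S2. c2 s * Poly_Mapping.lookup (?P s) w)"
      using S1(1) S2(1) unfolding c_def distrib_right sum.distrib
      by (simp add: if_distrib[of "\<lambda>a. a * _"] sum.If_cases Int_absorb1 Int_absorb2)
    then show "Poly_Mapping.lookup (f + g) w = Poly_Mapping.lookup (\<Sum>s\<in>S1 \<union> S2. pscale (c s) (?P s)) w"
      by (simp add: f g lookup_add lookup_sum lookup_pscale)
  qed
  moreover have "\<forall>s\<in>S1 \<union> S2. \<forall>t\<in>set s. admissible_factor m t"
    using S1(2) S2(2) by blast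
  ultimately show ?thesis
    unfolding last_in_comms_iff using S1(1) S2(1) by (intro exI[of _ "S1 \<union> S2"] exI[of _ c]) simp
qed

lemma last_in_comms_sum:
  "(\<And>i. i \<in> I \<Longrightarrow> last_in_comms z m (g i)) \<Longrightarrow> last_in_comms z m (\<Sum>i\<in>I. g i)"
  by (induction I rule: infinite_finite_induct) (auto intro: last_in_comms_zero last_in_comms_add)

lemma last_in_comms_move_last_var:
  assumes "0 < m" "set a \<subseteq> {..<m - 1}" "set b \<subseteq> {..<m - 1}"
  shows "last_in_comms z m (Poly_Mapping.single (map z a @ z (m - 1) # map z b) c
           - Poly_Mapping.single (map z (a @ b) @ [z (m - 1)]) c)"
  using assms(2,3)
proof (induction b arbitrary: a)
  case Nil
  then show ?case by (simp add: last_in_comms_zero)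
next
  case (Cons j b)
  let ?x = "z (m - 1)"
  have "Poly_Mapping.single (map z a @ ?x # z j # map z b) c - Poly_Mapping.single (map z a @ z j # ?x # map z b) c
     = pscale c (pprod (map (atom_poly z) (map Inl a @ Inr (m - 1, j) # map Inl b)))"
    unfolding pprod_atom_comm
    by (rule poly_mapping_eqI) (simp add: lookup_pscale lookup_minus lookup_single when_def)
  also have "last_in_comms z m \<dots>"
    by (rule last_in_comms_monomial) (use Cons.prems assms(1) in \<open>auto simp: admissible_factor_def\<close>)
  finally have swap: "last_in_comms z m
     (Poly_Mapping.single (map z a @ ?x # z j # map z b) c - Poly_Mapping.single (map z a @ z j # ?x # map z b) c)" .
  have rest: "last_in_comms z m (Poly_Mapping.single (map z (a @ [j]) @ ?x # map z b) c
           - Poly_Mapping.single (map z ((a @ [j]) @ b) @ [?x]) c)"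
    by (rule Cons.IH) (use Cons.prems in auto)
  show ?case
    using last_in_comms_add[OF swap rest] by simp
qed

section \<open>Multilinear polynomials and the last variable\<close>

definition remove_var :: "gvar \<Rightarrow> 'a::field ncpoly \<Rightarrow> 'a ncpoly" where
  "remove_var x f = (\<Sum>w\<in>Poly_Mapping.keys f. Poly_Mapping.single (remove1 x w) (Poly_Mapping.lookup f w))"

lemma pmul_remove_var_pvar:
  "pmul (remove_var x f) (pvar x) =
     (\<Sum>w\<in>Poly_Mapping.keys f. Poly_Mapping.single (remove1 x w @ [x]) (Poly_Mapping.lookup f w))"
  unfolding remove_var_def pmul_sum_left pvar_def pmul_single_single by simp

lemma image_lessThan_eq_insert_last: "0 < (m::nat) \<Longrightarrow> z ` {..<m} = insert (z (m - 1)) (z ` {..<m - 1})"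
  by (cases m) (auto simp: lessThan_Suc)

lemma last_notin_image_lessThan: "inj_on z {..<m} \<Longrightarrow> 0 < (m::nat) \<Longrightarrow> z (m - 1) \<notin> z ` {..<m - 1}"
  by (subst inj_on_image_mem_iff) auto

lemma Gamma_diff: "f \<in> Gamma z n \<Longrightarrow> g \<in> Gamma z n \<Longrightarrow> f - g \<in> Gamma z n"
  using keys_diff[of f g] unfolding Gamma_def by blast

lemma Gamma_remove_var_last:
  assumes "inj_on z {..<m}" "0 < m" "f \<in> Gamma z m"
  shows "remove_var (z (m - 1)) f \<in> Gamma z (m - 1)"
proof -
  let ?x = "z (m - 1)"
  have "Poly_Mapping.keys (remove_var ?x f) \<subseteq> remove1 ?x ` Poly_Mapping.keys f"
    unfolding remove_var_def by (rule order_trans[OF keys_sum]) auto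
  moreover have "distinct (remove1 ?x w) \<and> set (remove1 ?x w) = z ` {..<m - 1}"
    if "w \<in> Poly_Mapping.keys f" for w
    using that assms image_lessThan_eq_insert_last[OF assms(2), of z] last_notin_image_lessThan[OF assms(1,2)]
    unfolding Gamma_def by auto
  ultimately show ?thesis
    unfolding Gamma_def by blast
qed

lemma Gamma_pmul_pvar_last:
  assumes "inj_on z {..<m}" "0 < m" "g \<in> Gamma z (m - 1)"
  shows "pmul g (pvar (z (m - 1))) \<in> Gamma z m"
proof -
  let ?x = "z (m - 1)"
  have "Poly_Mapping.keys (pmul g (pvar ?x)) \<subseteq> (\<lambda>w. w @ [?x]) ` Poly_Mapping.keys g"
    unfolding pmul_pvar_right by (rule order_trans[OF keys_sum]) auto
  moreover have "distinct (w @ [?x]) \<and> set (w @ [?x]) = z ` {..<m}"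
    if "w \<in> Poly_Mapping.keys g" for w
    using that assms image_lessThan_eq_insert_last[OF assms(2), of z] last_notin_image_lessThan[OF assms(1,2)]
    unfolding Gamma_def by auto
  ultimately show ?thesis
    unfolding Gamma_def by blast
qed

lemma Gamma_keys_split_last:
  assumes "inj_on z {..<m}" "0 < m" "f \<in> Gamma z m" "w \<in> Poly_Mapping.keys f"
  obtains a b where "w = map z a @ z (m - 1) # map z b" "set a \<subseteq> {..<m - 1}" "set b \<subseteq> {..<m - 1}"
proof -
  let ?x = "z (m - 1)"
  have w: "distinct w" "set w = insert ?x (z ` {..<m - 1})"
    using assms(3,4) image_lessThan_eq_insert_last[OF assms(2), of z] unfolding Gamma_def by auto
  then obtain u v where uv: "w = u @ ?x # v"
    using split_list[of ?x w] by auto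
  have "?x \<notin> set u" "?x \<notin> set v"
    using w(1) uv by auto
  then have "set u \<union> set v \<subseteq> set w - {?x}"
    unfolding uv by auto
  also have "\<dots> \<subseteq> z ` {..<m - 1}"
    using w(2) by auto
  finally have "u \<in> lists (z ` {..<m - 1})" "v \<in> lists (z ` {..<m - 1})"
    by auto
  then obtain a b where "u = map z a" "a \<in> lists {..<m - 1}" "v = map z b" "b \<in> lists {..<m - 1}"
    unfolding lists_image by blast
  then show ?thesis
    using that uv by auto
qed

lemma last_in_comms_move_last:
  assumes "inj_on z {..<m}" "0 < m" "f \<in> Gamma z m"
  shows "last_in_comms z m (f - pmul (remove_var (z (m - 1)) f) (pvar (z (m - 1))))"
proof -
  let ?x = "z (m - 1)"
  have "f - pmul (remove_var ?x f) (pvar ?x) =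
    (\<Sum>w\<in>Poly_Mapping.keys f. Poly_Mapping.single w (Poly_Mapping.lookup f w)
       - Poly_Mapping.single (remove1 ?x w @ [?x]) (Poly_Mapping.lookup f w))"
    unfolding pmul_remove_var_pvar sum_subtractf using poly_mapping_sum_single[of f] by simp
  also have "last_in_comms z m \<dots>"
  proof (rule last_in_comms_sum)
    fix w assume "w \<in> Poly_Mapping.keys f"
    then obtain a b where w: "w = map z a @ ?x # map z b" and ab: "set a \<subseteq> {..<m - 1}" "set b \<subseteq> {..<m - 1}"
      using Gamma_keys_split_last assms by blast
    have "?x \<notin> set (map z a)"
      using ab last_notin_image_lessThan[OF assms(1,2)] by auto
    then have "remove1 ?x w = map z (a @ b)"
      unfolding w by (simp add: remove1_append)
    then show "last_in_comms z m (Poly_Mapping.single w (Poly_Mapping.lookup f w)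
       - Poly_Mapping.single (remove1 ?x w @ [?x]) (Poly_Mapping.lookup f w))"
      unfolding w using last_in_comms_move_last_var[OF assms(2) ab] by simp
  qed
  finally show ?thesis .
qed

section \<open>The Grassmann algebra\<close>

definition gfinite :: "(nat set \<Rightarrow> 'a::field) \<Rightarrow> bool" where
  "gfinite y \<longleftrightarrow> (\<forall>S. infinite S \<longrightarrow> y S = 0)"

definition gsupp_le :: "nat \<Rightarrow> (nat set \<Rightarrow> 'a::field) \<Rightarrow> bool" where
  "gsupp_le N y \<longleftrightarrow> (\<forall>T. y T \<noteq> 0 \<longrightarrow> T \<subseteq> {..N})"

definition gbasis :: "nat set \<Rightarrow> nat set \<Rightarrow> 'a::field" where
  "gbasis S T = (if T = S then 1 else 0)"

lemma gmult_infinite: "infinite S \<Longrightarrow> gmult x y S = 0"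
  by (simp add: gmult_def)

lemma gfinite_gmult: "gfinite (gmult x y)"
  by (simp add: gfinite_def gmult_infinite)

lemma gfinite_foldr_gmult: "gfinite (foldr gmult ws gone)"
  by (cases ws) (auto simp: gfinite_def gone_def gmult_infinite)

lemma ghom_gfinite: "ghom h k y \<Longrightarrow> gfinite y"
  unfolding ghom_def gelem_def gfinite_def by blast

lemma ginv_empty_left [simp]: "ginv {} B = 0"
  by (simp add: ginv_def)

lemma ginv_empty_right [simp]: "ginv A {} = 0"
  by (simp add: ginv_def)

lemma gmult_gone_left: "gfinite y \<Longrightarrow> gmult gone y = y"
proof (rule ext)
  fix S assume y: "gfinite y"
  show "gmult gone y S = y S"
  proof (cases "finite S")
    case True
    have "gmult gone y S = (\<Sum>A\<in>Pow S. if A = {} then y S else 0)"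
      unfolding gmult_def gone_def by (rule sum.cong) auto
    then show ?thesis using True by simp
  qed (use y in \<open>simp add: gfinite_def gmult_infinite\<close>)
qed

lemma gmult_gone_right: "gfinite y \<Longrightarrow> gmult y gone = y"
proof (rule ext)
  fix S assume y: "gfinite y"
  show "gmult y gone S = y S"
  proof (cases "finite S")
    case True
    have "gmult y gone S = (\<Sum>A\<in>Pow S. if A = S then y S else 0)"
      unfolding gmult_def gone_def by (rule sum.cong) auto
    then show ?thesis using True by simp
  qed (use y in \<open>simp add: gfinite_def gmult_infinite\<close>)
qed

lemma ginv_Un_left:
  assumes "finite A" "finite B" "finite D" "A \<inter> B = {}"
  shows "ginv (A \<union> B) D = ginv A D + ginv B D"
proof -
  have "{(a, b). a \<in> A \<union> B \<and> b \<in> D \<and> b < a}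
      = {(a, b). a \<in> A \<and> b \<in> D \<and> b < a} \<union> {(a, b). a \<in> B \<and> b \<in> D \<and> b < a}"
    by auto
  moreover have "finite {(a, b). a \<in> A \<and> b \<in> D \<and> b < a}" "finite {(a, b). a \<in> B \<and> b \<in> D \<and> b < a}"
    by (rule finite_subset[of _ "A \<times> D"] finite_subset[of _ "B \<times> D"]; use assms in auto)+
  ultimately show ?thesis
    unfolding ginv_def using assms(4) by (subst card_Un_disjoint[symmetric]) auto
qed

lemma ginv_Un_right:
  assumes "finite A" "finite B" "finite D" "B \<inter> D = {}"
  shows "ginv A (B \<union> D) = ginv A B + ginv A D"
proof -
  have "{(a, b). a \<in> A \<and> b \<in> B \<union> D \<and> b < a}
      = {(a, b). a \<in> A \<and> b \<in> B \<and> b < a} \<union> {(a, b). a \<in> A \<and> b \<in> D \<and> b < a}"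
    by auto
  moreover have "finite {(a, b). a \<in> A \<and> b \<in> B \<and> b < a}" "finite {(a, b). a \<in> A \<and> b \<in> D \<and> b < a}"
    by (rule finite_subset[of _ "A \<times> B"] finite_subset[of _ "A \<times> D"]; use assms in auto)+
  ultimately show ?thesis
    unfolding ginv_def using assms(4) by (subst card_Un_disjoint[symmetric]) auto
qed

(* Both sides sum over ordered splittings S = B \<union> C \<union> (S - B - C); the signs agree because
   ginv is additive in each argument. *)
lemma gmult_assoc: "gmult (gmult x y) w = gmult x (gmult y w)"
proof (rule ext)
  fix S :: "nat set"
  show "gmult (gmult x y) w S = gmult x (gmult y w) S"
  proof (cases "finite S")
    case False
    then show ?thesis by (simp add: gmult_infinite)
  next
    case True
    define F where "F A B = (-1) ^ ginv A (S - A) * (-1) ^ ginv B (A - B) * x B * y (A - B) * w (S - A)" for A B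
    define G where "G B C = (-1) ^ ginv B (S - B) * (-1) ^ ginv C (S - B - C) * x B * y C * w (S - B - C)" for B C
    have "gmult (gmult x y) w S = (\<Sum>A\<in>Pow S. \<Sum>B\<in>Pow A. F A B)"
      unfolding gmult_def F_def by (simp add: sum_distrib_left sum_distrib_right mult_ac)
    also have "\<dots> = (\<Sum>A\<in>Pow S. \<Sum>B\<in>{B. B \<in> Pow S \<and> B \<subseteq> A}. F A B)"
      by (rule sum.cong[OF refl], rule sum.cong) auto
    also have "\<dots> = (\<Sum>B\<in>Pow S. \<Sum>A\<in>{A. A \<in> Pow S \<and> B \<subseteq> A}. F A B)"
      by (rule sum.swap_restrict) (use True in auto)
    also have "\<dots> = (\<Sum>B\<in>Pow S. \<Sum>C\<in>Pow (S - B). G B C)"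
    proof (rule sum.cong[OF refl])
      fix B assume B: "B \<in> Pow S"
      show "(\<Sum>A\<in>{A. A \<in> Pow S \<and> B \<subseteq> A}. F A B) = (\<Sum>C\<in>Pow (S - B). G B C)"
      proof (rule sym, rule sum.reindex_bij_witness[of _ "\<lambda>A. A - B" "\<lambda>C. B \<union> C"])
        fix C assume C: "C \<in> Pow (S - B)"
        have fin: "finite B" "finite C" "finite (S - B - C)"
          using B C True by (auto intro: finite_subset)
        have "S - B = C \<union> (S - B - C)"
          using C by auto
        then have "ginv B (S - B) = ginv B C + ginv B (S - B - C)"
          using ginv_Un_right[OF fin(1,2,3)] by simp
        moreover have "ginv (B \<union> C) (S - B - C) = ginv B (S - B - C) + ginv C (S - B - C)"
          by (rule ginv_Un_left) (use fin C in auto)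
        moreover have "S - (B \<union> C) = S - B - C" "(B \<union> C) - B = C"
          using C by auto
        ultimately show "F (B \<union> C) B = G B C"
          unfolding F_def G_def by (simp add: power_add mult_ac)
      qed (use B in auto)
    qed
    also have "\<dots> = gmult x (gmult y w) S"
      unfolding gmult_def G_def by (simp add: sum_distrib_left sum_distrib_right mult_ac Diff_Un Un_commute)
    finally show ?thesis .
  qed
qed

lemma foldr_gmult_eq_gmult: "gfinite y \<Longrightarrow> foldr gmult ws y = gmult (foldr gmult ws gone) y"
  by (induction ws) (simp_all add: gmult_gone_left gmult_assoc)

lemma gmult_sum_left:
  "gmult (\<lambda>T. \<Sum>i\<in>I. c i * g i T) y = (\<lambda>S. \<Sum>i\<in>I. c i * gmult (g i) y S)"
proof (rule ext)
  fix S
  have "gmult (\<lambda>T. \<Sum>i\<in>I. c i * g i T) y S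
      = (\<Sum>A\<in>Pow S. \<Sum>i\<in>I. c i * ((-1) ^ ginv A (S - A) * g i A * y (S - A)))"
    by (simp add: gmult_def sum_distrib_left sum_distrib_right mult_ac)
  also have "\<dots> = (\<Sum>i\<in>I. c i * gmult (g i) y S)"
    by (subst sum.swap) (simp add: gmult_def sum_distrib_left)
  finally show "gmult (\<lambda>T. \<Sum>i\<in>I. c i * g i T) y S = (\<Sum>i\<in>I. c i * gmult (g i) y S)" .
qed

lemma gmult_nonzero_split:
  assumes "gmult a b T \<noteq> 0"
  obtains A where "A \<subseteq> T" "a A \<noteq> 0" "b (T - A) \<noteq> 0"
proof (rule ccontr)
  assume "\<not> thesis"
  then have "\<forall>A\<in>Pow T. (-1) ^ ginv A (T - A) * a A * b (T - A) = 0"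
    using that by auto
  then have "gmult a b T = 0"
    unfolding gmult_def by (rule sum.neutral)
  then show False
    using assms by contradiction
qed

lemma gsupp_le_gmult:
  assumes "gsupp_le N a" "gsupp_le N b"
  shows "gsupp_le N (gmult a b)"
  unfolding gsupp_le_def
proof (intro allI impI)
  fix T assume "gmult a b T \<noteq> 0"
  then obtain A where "A \<subseteq> T" "a A \<noteq> 0" "b (T - A) \<noteq> 0"
    by (rule gmult_nonzero_split)
  then show "T \<subseteq> {..N}"
    using assms unfolding gsupp_le_def by blast
qed

lemma gsupp_le_foldr_gmult: "\<forall>a\<in>set ws. gsupp_le N a \<Longrightarrow> gsupp_le N (foldr gmult ws gone)"
  by (induction ws) (auto simp: gsupp_le_def[of N gone] gone_def intro: gsupp_le_gmult)

lemma gsupp_le_sum: "\<forall>i\<in>I. gsupp_le N (g i) \<Longrightarrow> gsupp_le N (\<lambda>T. \<Sum>i\<in>I. c i * g i T)"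
  unfolding gsupp_le_def by (fastforce intro: sum.neutral)

lemma gsupp_le_mono: "gsupp_le N y \<Longrightarrow> N \<le> N' \<Longrightarrow> gsupp_le N' y"
  unfolding gsupp_le_def by fastforce

lemma gelem_gsupp_le:
  assumes "gelem y"
  obtains N where "gsupp_le N y"
proof
  let ?U = "\<Union>{T. y T \<noteq> 0}"
  have "finite ?U"
    using assms unfolding gelem_def by blast
  then show "gsupp_le (Max (insert 0 ?U)) y"
    unfolding gsupp_le_def by (auto intro!: Max_ge)
qed

lemma gsupp_le_common_bound:
  assumes "finite V" "\<forall>v\<in>V. gelem (\<phi> v)"
  obtains N where "h \<le> N" "\<forall>v\<in>V. gsupp_le N (\<phi> v)"
  using assms
proof (induction V arbitrary: thesis rule: finite_induct)
  case empty
  then show ?case by blast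
next
  case (insert v V)
  obtain N1 where "h \<le> N1" "\<forall>u\<in>V. gsupp_le N1 (\<phi> u)"
    using insert.IH insert.prems(2) by blast
  moreover obtain N2 where "gsupp_le N2 (\<phi> v)"
    using gelem_gsupp_le insert.prems(2) by blast
  ultimately show ?case
    using insert.prems(1)[of "max N1 N2"] gsupp_le_mono by fastforce
qed

lemma gmult_gbasis_left:
  assumes "finite T"
  shows "gmult (gbasis S) y T = (if S \<subseteq> T then (-1) ^ ginv S (T - S) * y (T - S) else 0)"
proof -
  have "gmult (gbasis S) y T = (\<Sum>A\<in>Pow T. if A = S then (-1) ^ ginv S (T - S) * y (T - S) else 0)"
    unfolding gmult_def gbasis_def by (intro sum.cong) auto
  then show ?thesis
    using assms by (simp add: sum.delta)
qed

lemma gmult_gbasis_right: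
  assumes "finite T"
  shows "gmult y (gbasis S) T = (if S \<subseteq> T then (-1) ^ ginv (T - S) S * y (T - S) else 0)"
proof -
  have "T - A = S \<longleftrightarrow> S \<subseteq> T \<and> A = T - S" if "A \<subseteq> T" for A
    using that by auto
  then have "gmult y (gbasis S) T = (\<Sum>A\<in>Pow T. if A = T - S then (if S \<subseteq> T then (-1) ^ ginv A (T - A) * y A else 0) else 0)"
    unfolding gmult_def gbasis_def by (intro sum.cong) auto
  then show ?thesis
    using assms by (simp add: sum.delta double_diff)
qed

lemma ginv_eq_0_if_less:
  assumes "A \<subseteq> {..N}" "\<forall>s\<in>S. N < s"
  shows "ginv A S = 0"
proof -
  have no_inversions: "{(a, b). a \<in> A \<and> b \<in> S \<and> b < a} = {}"
    using assms by fastforce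
  show ?thesis
    unfolding ginv_def no_inversions by simp
qed

(* Moving e_S past a monomial e_T with T below S costs card S * card T transpositions. *)
lemma gbasis_commute:
  assumes "finite S" "even (card S)" "\<forall>s\<in>S. N < s" "gsupp_le N y"
  shows "gmult (gbasis S) y = gmult y (gbasis S)"
proof (rule ext)
  fix T :: "nat set"
  show "gmult (gbasis S) y T = gmult y (gbasis S) T"
  proof (cases "finite T")
    case False
    then show ?thesis by (simp add: gmult_infinite)
  next
    case fin: True
    show ?thesis
    proof (cases "S \<subseteq> T \<and> y (T - S) \<noteq> 0")
      case False
      then show ?thesis
        using fin by (auto simp: gmult_gbasis_left gmult_gbasis_right)
    next
      case True
      then have below: "T - S \<subseteq> {..N}"
        using assms(4) unfolding gsupp_le_def by blast
      then have "{(a, b). a \<in> S \<and> b \<in> T - S \<and> b < a} = S \<times> (T - S)"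
        using assms(3) by fastforce
      then have "ginv S (T - S) = card S * card (T - S)"
        unfolding ginv_def by (simp add: card_cartesian_product)
      moreover have "ginv (T - S) S = 0"
        using ginv_eq_0_if_less[OF below assms(3)] .
      ultimately show ?thesis
        using fin True assms(2) by (simp add: gmult_gbasis_left gmult_gbasis_right)
    qed
  qed
qed

lemma gmult_gbasis_eq_0_imp:
  assumes "finite S" "\<forall>s\<in>S. N < s" "gsupp_le N y" "gmult y (gbasis S) = (\<lambda>_. 0)"
  shows "y = (\<lambda>_. 0)"
proof (rule ext, rule ccontr)
  fix T assume "y T \<noteq> 0"
  then have below: "T \<subseteq> {..N}"
    using assms(3) unfolding gsupp_le_def by blast
  then have "finite (T \<union> S)" "T \<union> S - S = T"
    using assms(1,2) finite_subset by fastforce+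
  then have "gmult y (gbasis S) (T \<union> S) = y T"
    using ginv_eq_0_if_less[OF below assms(2)] by (simp add: gmult_gbasis_right)
  then show False
    using \<open>y T \<noteq> 0\<close> assms(4) by simp
qed

lemma ghom_gbasis:
  assumes "finite S" "\<forall>s\<in>S. h < s"
  shows "ghom h (int (card S)) (gbasis S)"
proof -
  have "{T. gbasis S T \<noteq> (0::'a)} = {S}" "{i \<in> S. h < i} = S"
    using assms(2) by (auto simp: gbasis_def)
  then show ?thesis
    using assms unfolding ghom_def gelem_def by (auto simp: gbasis_def)
qed

section \<open>Evaluation and graded identities\<close>

lemma geval_keys_superset:
  assumes "finite K" "Poly_Mapping.keys f \<subseteq> K"
  shows "geval \<phi> f = (\<lambda>S. \<Sum>w\<in>K. Poly_Mapping.lookup f w * foldr gmult (map \<phi> w) gone S)"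
  unfolding geval_def
  by (rule ext, rule sum.mono_neutral_left) (use assms in \<open>auto simp: lookup_eq_0_if_notin_keys\<close>)

lemma geval_add: "geval \<phi> (f + g) = (\<lambda>S. geval \<phi> f S + geval \<phi> g S)"
  by (subst (1 2 3) geval_keys_superset[where K="Poly_Mapping.keys f \<union> Poly_Mapping.keys g"])
    (use keys_add[of f g] in \<open>auto simp: lookup_add distrib_right sum.distrib\<close>)

lemma geval_diff: "geval \<phi> (f - g) = (\<lambda>S. geval \<phi> f S - geval \<phi> g S)"
  by (subst (1 2 3) geval_keys_superset[where K="Poly_Mapping.keys f \<union> Poly_Mapping.keys g"])
    (use keys_diff[of f g] in \<open>auto simp: lookup_minus left_diff_distrib sum_subtractf\<close>)

lemma geval_single: "geval \<phi> (Poly_Mapping.single w c) = (\<lambda>S. c * foldr gmult (map \<phi> w) gone S)"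
  by (subst geval_keys_superset[where K="{w}"]) auto

lemma geval_sum: "geval \<phi> (\<Sum>i\<in>I. g i) = (\<lambda>S. \<Sum>i\<in>I. geval \<phi> (g i) S)"
  by (induction I rule: infinite_finite_induct) (simp_all add: geval_add geval_def[of _ 0])

lemma geval_pmul_pvar:
  assumes "gfinite (\<phi> x)"
  shows "geval \<phi> (pmul p (pvar x)) = gmult (geval \<phi> p) (\<phi> x)"
proof -
  have "foldr gmult (map \<phi> (w @ [x])) gone = gmult (foldr gmult (map \<phi> w) gone) (\<phi> x)" for w
    using foldr_gmult_eq_gmult[OF assms, of "map \<phi> w"] by (simp add: gmult_gone_right[OF assms])
  then show ?thesis
    unfolding pmul_pvar_right geval_sum geval_single geval_def gmult_sum_left by simp
qed

lemma geval_remove_var: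
  "geval \<phi> (remove_var x f) =
     (\<lambda>T. \<Sum>w\<in>Poly_Mapping.keys f. Poly_Mapping.lookup f w * foldr gmult (map \<phi> (remove1 x w)) gone T)"
  unfolding remove_var_def geval_sum geval_single ..

lemma TZ_diff: "f \<in> TZ h \<Longrightarrow> g \<in> TZ h \<Longrightarrow> f - g \<in> TZ h"
  unfolding TZ_def by (simp add: geval_diff)

lemma TZ_pmul_pvar:
  assumes "p \<in> TZ h"
  shows "pmul p (pvar x) \<in> TZ h"
  unfolding TZ_def
proof (intro CollectI allI impI)
  fix \<phi> :: "gvar \<Rightarrow> nat set \<Rightarrow> 'a" assume \<phi>: "\<forall>y. ghom h (fst y) (\<phi> y)"
  then have "geval \<phi> p = (\<lambda>_. 0)"
    using assms unfolding TZ_def by blast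
  moreover have "gfinite (\<phi> x)"
    using \<phi> ghom_gfinite by blast
  ultimately show "geval \<phi> (pmul p (pvar x)) = (\<lambda>_. 0)"
    by (simp add: geval_pmul_pvar gmult_def fun_eq_iff)
qed

lemma foldr_gmult_subst_central:
  assumes "x \<notin> set u" "x \<notin> set v"
    and "gmult c (foldr gmult (map \<phi> v) gone) = gmult (foldr gmult (map \<phi> v) gone) c"
  shows "foldr gmult (map (\<phi>(x := c)) (u @ x # v)) gone = gmult (foldr gmult (map \<phi> (u @ v)) gone) c"
proof -
  let ?U = "map \<phi> u" and ?V = "foldr gmult (map \<phi> v) gone"
  have maps: "map (\<phi>(x := c)) u = ?U" "map (\<phi>(x := c)) v = map \<phi> v"
    using assms(1,2) by (auto simp: map_eq_conv)
  have "foldr gmult (map (\<phi>(x := c)) (u @ x # v)) gone = foldr gmult ?U (gmult ?V c)"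
    using assms(3) by (simp add: maps fun_upd_same del: fun_upd_apply)
  also have "\<dots> = gmult (gmult (foldr gmult ?U gone) ?V) c"
    by (simp add: foldr_gmult_eq_gmult[OF gfinite_gmult] gmult_assoc)
  also have "\<dots> = gmult (foldr gmult (map \<phi> (u @ v)) gone) c"
    by (simp add: foldr_gmult_eq_gmult[OF gfinite_foldr_gmult])
  finally show ?thesis .
qed

lemma geval_fun_upd_central:
  assumes "\<forall>w\<in>Poly_Mapping.keys f. distinct w \<and> x \<in> set w"
    and "\<forall>w\<in>Poly_Mapping.keys f. \<forall>y\<in>set w. gsupp_le N (\<phi> y)"
    and "\<And>y. gsupp_le N y \<Longrightarrow> gmult c y = gmult y c"
  shows "geval (\<phi>(x := c)) f = gmult (geval \<phi> (remove_var x f)) c"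
proof -
  have "foldr gmult (map (\<phi>(x := c)) w) gone = gmult (foldr gmult (map \<phi> (remove1 x w)) gone) c"
    if w: "w \<in> Poly_Mapping.keys f" for w
  proof -
    obtain u v where uv: "w = u @ x # v"
      using assms(1) w split_list by metis
    have x: "x \<notin> set u" "x \<notin> set v"
      using assms(1) w uv by auto
    have "gsupp_le N (foldr gmult (map \<phi> v) gone)"
      using assms(2) w uv by (intro gsupp_le_foldr_gmult) auto
    then have "foldr gmult (map (\<phi>(x := c)) w) gone = gmult (foldr gmult (map \<phi> (u @ v)) gone) c"
      unfolding uv by (rule foldr_gmult_subst_central[OF x assms(3)])
    moreover have "remove1 x w = u @ v"
      unfolding uv using x by (simp add: remove1_append)
    ultimately show ?thesis
      by simp
  qed
  then have "geval (\<phi>(x := c)) f =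
      (\<lambda>T. \<Sum>w\<in>Poly_Mapping.keys f. Poly_Mapping.lookup f w * gmult (foldr gmult (map \<phi> (remove1 x w)) gone) c T)"
    unfolding geval_def[abs_def] by (intro ext sum.cong) auto
  also have "\<dots> = gmult (geval \<phi> (remove_var x f)) c"
    unfolding geval_remove_var gmult_sum_left ..
  finally show ?thesis .
qed

lemma TZ_remove_var:
  assumes "f \<in> TZ h" "\<forall>w\<in>Poly_Mapping.keys f. distinct w \<and> x \<in> set w"
    and "0 \<le> fst x" "even (fst x)"
  shows "remove_var x f \<in> TZ h"
  unfolding TZ_def
proof (intro CollectI allI impI)
  fix \<phi> :: "gvar \<Rightarrow> nat set \<Rightarrow> 'a" assume \<phi>: "\<forall>y. ghom h (fst y) (\<phi> y)"
  obtain N where "h \<le> N" and N: "\<forall>y\<in>\<Union>(set ` Poly_Mapping.keys f). gsupp_le N (\<phi> y)"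
    using gsupp_le_common_bound[of "\<Union>(set ` Poly_Mapping.keys f)" \<phi> h] \<phi>
    unfolding ghom_def by auto
  define S where "S = {N + 1..N + nat (fst x)}"
  have S: "finite S" "card S = nat (fst x)" "\<forall>s\<in>S. N < s"
    unfolding S_def by auto
  then have "even (card S)"
    using assms(3,4) by (simp add: even_nat_iff)
  have "ghom h (fst x) (gbasis S)"
    using ghom_gbasis[of S h] S \<open>h \<le> N\<close> assms(3) by fastforce
  then have "\<forall>y. ghom h (fst y) ((\<phi>(x := gbasis S)) y)"
    using \<phi> by (metis fun_upd_apply)
  then have "geval (\<phi>(x := gbasis S)) f = (\<lambda>_. 0)"
    using assms(1) unfolding TZ_def by blast
  moreover have "geval (\<phi>(x := gbasis S)) f = gmult (geval \<phi> (remove_var x f)) (gbasis S)"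
    using assms(2) N gbasis_commute[OF S(1) \<open>even (card S)\<close> S(3)]
    by (intro geval_fun_upd_central) auto
  moreover have "gsupp_le N (geval \<phi> (remove_var x f))"
    unfolding geval_remove_var using N
    by (intro gsupp_le_sum ballI gsupp_le_foldr_gmult) (auto dest: set_remove1_subset[THEN subsetD])
  ultimately show "geval \<phi> (remove_var x f) = (\<lambda>_. 0)"
    using gmult_gbasis_eq_0_imp S by metis
qed

theorem mainTheorem11:
  fixes z :: "nat \<Rightarrow> gvar" and d :: "nat \<Rightarrow> int" and h p q m :: nat
    and f :: "'a::field_char_0 ncpoly"
  assumes "m = p + q" and "q \<ge> 1"
    and "inj_on z {..<m}"
    and "\<And>i. i < m \<Longrightarrow> fst (z i) = d i"
    and "\<And>i. i < m \<Longrightarrow> d i > 0"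
    and "\<And>i. i < p \<Longrightarrow> odd (d i)"
    and "\<And>i. p \<le> i \<Longrightarrow> i < m \<Longrightarrow> even (d i)"
    and "f \<in> Gamma z m \<inter> TZ h"
  shows "\<exists>f1 f2. f - (pmul f1 (pvar (z (m - 1))) + f2) \<in> Iideal
           \<and> f1 \<in> Gamma z (m - 1) \<inter> TZ h
           \<and> last_in_comms z m f2
           \<and> f2 \<in> Gamma z m \<inter> TZ h"
proof -
  let ?x = "z (m - 1)"
  have m: "0 < m" "p \<le> m - 1" "m - 1 < m"
    using assms(1,2) by auto
  have f: "f \<in> Gamma z m" "f \<in> TZ h"
    using assms(8) by auto
  define f1 where "f1 = remove_var ?x f"
  define f2 where "f2 = f - pmul f1 (pvar ?x)"
  have f1_Gamma: "f1 \<in> Gamma z (m - 1)"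
    unfolding f1_def using Gamma_remove_var_last assms(3) m(1) f(1) .
  have f1_TZ: "f1 \<in> TZ h"
    unfolding f1_def
  proof (rule TZ_remove_var)
    show "\<forall>w\<in>Poly_Mapping.keys f. distinct w \<and> ?x \<in> set w"
      using f(1) m unfolding Gamma_def by auto
    (* Only the parity of deg z_m matters. *)
    show "0 \<le> fst ?x" "even (fst ?x)"
      using assms(4,5,7) m by (auto simp: less_imp_le)
  qed (use f in auto)
  have "f2 \<in> Gamma z m"
    unfolding f2_def by (intro Gamma_diff Gamma_pmul_pvar_last f(1) f1_Gamma assms(3) m(1))
  moreover have "f2 \<in> TZ h"
    unfolding f2_def by (intro TZ_diff TZ_pmul_pvar f(2) f1_TZ)
  moreover have "last_in_comms z m f2"
    unfolding f2_def f1_def by (rule last_in_comms_move_last[OF assms(3) m(1) f(1)])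
  moreover have "f - (pmul f1 (pvar ?x) + f2) \<in> Iideal"
    unfolding f2_def by (simp add: Iideal.zero)
  ultimately show ?thesis
    using f1_Gamma f1_TZ by blast
qed

end
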